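(* Let $\rho=\sum_{i=0}^n\lambda_i|D_n^i\rangle\langle D_n^i|$ with $\lambda_i\ge0$, $\sum_i\lambda_i=1$, and let $1\le k\le n$. Suppose the linear system in the unknowns $(a_{0},\dots,a_{n})$ $$\sum_{i=0}^n a_{i}\frac{\binom{k}{s}\binom{n-k}{i-s}}{\binom{n}{i}}=\sum_{i=0}^n\lambda_i\frac{\binom{k}{s}\binom{n-k}{i-s}}{\binom{n}{i}},\qquad 0\le s\le k,$$ has a solution with $a_i\ge0$ for all $i$ and $(a_0,\dots,a_n)\ne(\lambda_0,\dots,\lambda_n)$. Then $L(\rho)\ge k+1$.
   Context: Convention: $\binom{m}{i}=0$ if $i<0$ or $i>m$. Dicke states: $|D_n^i\rangle=\binom{n}{i}^{-1/2}\sum_{s\in\{0,1\}^n,\ \sum_js_j=i}|s_1\rangle\otimes\cdots\otimes|s_n\rangle$. For $S\subseteq[n]$, $\rho_S$ is the partial trace of $\rho$ over qubits outside $S$; $\mathcal C(\rho,\mathcal S)=\{\sigma\text{ density matrix}:\sigma_S=\rho_S\ \forall S\in\mathcal S\}$; $\mathcal S$ determines $\rho$ if $\mathcal C(\rho,\mathcal S)=\{\rho\}$; $L(\rho)=\min_{\mathcal S\text{ determines }\rho}\max_{S\in\mathcal S}|S|$. *)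

theory Defs
  imports Complex_Main
begin

text \<open>Computational basis states of n qubits (qubits indexed 0..n-1):
  functions nat => bool vanishing outside {0..<n}.\<close>

definition basis :: "nat \<Rightarrow> (nat \<Rightarrow> bool) set" where
  "basis n = {s. \<forall>i. n \<le> i \<longrightarrow> \<not> s i}"

type_synonym qmat = "(nat \<Rightarrow> bool) \<Rightarrow> (nat \<Rightarrow> bool) \<Rightarrow> complex"

definition density :: "nat \<Rightarrow> qmat \<Rightarrow> bool" where
  "density n M \<longleftrightarrow>
     (\<forall>x y. x \<notin> basis n \<or> y \<notin> basis n \<longrightarrow> M x y = 0) \<and>
     (\<forall>x y. M y x = cnj (M x y)) \<and>
     (\<forall>v :: (nat \<Rightarrow> bool) \<Rightarrow> complex.
        let q = (\<Sum>x\<in>basis n. \<Sum>y\<in>basis n. cnj (v x) * M x y * v y)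
        in Im q = 0 \<and> 0 \<le> Re q) \<and>
     (\<Sum>x\<in>basis n. M x x) = 1"

definition sub_basis :: "nat set \<Rightarrow> (nat \<Rightarrow> bool) set" where
  "sub_basis S = {a. \<forall>i. i \<notin> S \<longrightarrow> \<not> a i}"

definition merge :: "nat set \<Rightarrow> (nat \<Rightarrow> bool) \<Rightarrow> (nat \<Rightarrow> bool) \<Rightarrow> (nat \<Rightarrow> bool)" where
  "merge S a z = (\<lambda>i. if i \<in> S then a i else z i)"

text \<open>Partial trace over the qubits outside S (for S \<subseteq> {0..<n}); the
  reduced matrix has entries indexed by a, b \<in> sub_basis S.\<close>
definition ptrace :: "nat \<Rightarrow> nat set \<Rightarrow> qmat \<Rightarrow> qmat" where
  "ptrace n S M a b =
     (\<Sum>z\<in>basis n \<inter> sub_basis ({0..<n} - S). M (merge S a z) (merge S b z))"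

definition marg_eq :: "nat \<Rightarrow> nat set \<Rightarrow> qmat \<Rightarrow> qmat \<Rightarrow> bool" where
  "marg_eq n S M N \<longleftrightarrow>
     (\<forall>a\<in>sub_basis S. \<forall>b\<in>sub_basis S. ptrace n S M a b = ptrace n S N a b)"

definition compat :: "nat \<Rightarrow> qmat \<Rightarrow> nat set set \<Rightarrow> qmat set" where
  "compat n \<rho> \<S> = {\<sigma>. density n \<sigma> \<and> (\<forall>S\<in>\<S>. marg_eq n S \<sigma> \<rho>)}"

definition determines :: "nat \<Rightarrow> nat set set \<Rightarrow> qmat \<Rightarrow> bool" where
  "determines n \<S> \<rho> \<longleftrightarrow> (\<forall>S\<in>\<S>. S \<subseteq> {0..<n}) \<and> compat n \<rho> \<S> = {\<rho>}"

definition Lval :: "nat \<Rightarrow> qmat \<Rightarrow> nat" where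
  "Lval n \<rho> = (LEAST m. \<exists>\<S>. determines n \<S> \<rho> \<and> (\<forall>S\<in>\<S>. card S \<le> m))"

definition dicke :: "nat \<Rightarrow> nat \<Rightarrow> (nat \<Rightarrow> bool) \<Rightarrow> complex" where
  "dicke n i s = (if s \<in> basis n \<and> card {j. j < n \<and> s j} = i
                  then complex_of_real (1 / sqrt (real (n choose i))) else 0)"

definition dicke_mix :: "nat \<Rightarrow> (nat \<Rightarrow> real) \<Rightarrow> qmat" where
  "dicke_mix n lam x y = (\<Sum>i\<le>n. complex_of_real (lam i) * dicke n i x * cnj (dicke n i y))"

text \<open>Binomial coefficient with the convention binom m i = 0 for i < 0 or i > m.\<close>
definition binom :: "nat \<Rightarrow> int \<Rightarrow> real" where
  "binom m i = (if i < 0 then 0 else real (m choose nat i))"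

end

theory Submission imports Defs begin

text \<open>A Dicke mixture depends on a basis state only through its Hamming weight, so its reduction
  to a set S of t qubits is again diagonal in weight, with entry at an S-label of weight r
  equal to the ``moment'' \<open>\<Sum>\<^sub>i \<lambda>\<^sub>i binom(n-t, i-r) / binom(n, i)\<close>.
  Pascal's rule expresses the moments for t qubits through those for t+1 qubits, so the
  hypothesis (the k-qubit moments of a and \<lambda> agree) propagates to all smaller subsystems.
  Hence the Dicke mixture with weights a is a state different from \<rho> with the same marginals
  on every set of at most k qubits, and no family of such sets determines \<rho>.\<close>

definition weight :: "nat \<Rightarrow> (nat \<Rightarrow> bool) \<Rightarrow> nat" where
  "weight n x = card {j. j < n \<and> x j}"

lemma weight_le: "weight n x \<le> n"
proof -
  have "{j. j < n \<and> x j} \<subseteq> {..<n}" by auto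
  then show ?thesis unfolding weight_def by (metis card_lessThan card_mono finite_lessThan)
qed

lemma finite_basis: "finite (basis n)"
proof -
  have "basis n \<subseteq> (\<lambda>A j. j \<in> A) ` Pow {..<n}"
  proof
    fix s assume "s \<in> basis n"
    then have "s = (\<lambda>j. j \<in> {j. j < n \<and> s j})" unfolding basis_def by (auto simp: not_le[symmetric])
    then show "s \<in> (\<lambda>A j. j \<in> A) ` Pow {..<n}" by blast
  qed
  then show ?thesis by (rule finite_subset) auto
qed

lemma sub_basis_atLeast0LessThan: "sub_basis {0..<n} = basis n"
  unfolding basis_def sub_basis_def by (auto simp: not_le[symmetric])

lemma card_weight_eq:
  assumes "T \<subseteq> {0..<n}"
  shows "card {z \<in> basis n \<inter> sub_basis T. weight n z = m} = card T choose m"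
proof -
  have "bij_betw (\<lambda>z. {j. z j}) {z \<in> basis n \<inter> sub_basis T. weight n z = m} {B. B \<subseteq> T \<and> card B = m}"
  proof (rule bij_betw_byWitness[where f'="\<lambda>A j. j \<in> A"])
    show "(\<lambda>z. {j. z j}) ` {z \<in> basis n \<inter> sub_basis T. weight n z = m} \<subseteq> {B. B \<subseteq> T \<and> card B = m}"
    proof (rule image_subsetI)
      fix z assume z: "z \<in> {z \<in> basis n \<inter> sub_basis T. weight n z = m}"
      then have "{j. j < n \<and> z j} = {j. z j}" unfolding basis_def by (auto simp: not_le[symmetric])
      then show "{j. z j} \<in> {B. B \<subseteq> T \<and> card B = m}" using z unfolding weight_def sub_basis_def by auto
    qed
    show "(\<lambda>A j. j \<in> A) ` {B. B \<subseteq> T \<and> card B = m} \<subseteq> {z \<in> basis n \<inter> sub_basis T. weight n z = m}"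
    proof (rule image_subsetI)
      fix B assume B: "B \<in> {B. B \<subseteq> T \<and> card B = m}"
      then have "{j. j < n \<and> j \<in> B} = B" using assms by auto
      then show "(\<lambda>j. j \<in> B) \<in> {z \<in> basis n \<inter> sub_basis T. weight n z = m}"
        using B assms unfolding basis_def sub_basis_def weight_def by auto
    qed
  qed auto
  then have "card {z \<in> basis n \<inter> sub_basis T. weight n z = m} = card {B. B \<subseteq> T \<and> card B = m}"
    by (rule bij_betw_same_card)
  also have "\<dots> = card T choose m" using n_subsets assms finite_subset by blast
  finally show ?thesis .
qed

lemma card_basis_weight_eq: "card {x \<in> basis n. weight n x = i} = n choose i"
  using card_weight_eq[of "{0..<n}" n i] by (simp add: sub_basis_atLeast0LessThan)

lemma basis_weight_exists:
  assumes "i \<le> n"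
  obtains x where "x \<in> basis n" "weight n x = i"
proof
  show "(\<lambda>j. j < i) \<in> basis n" using assms unfolding basis_def by auto
  have "{j. j < n \<and> j < i} = {..<i}" using assms by auto
  then show "weight n (\<lambda>j. j < i) = i" unfolding weight_def by simp
qed

lemma cnj_dicke [simp]: "cnj (dicke n i x) = dicke n i x"
  unfolding dicke_def by simp

lemma dicke_mix_eq:
  "dicke_mix n c x y = (if x \<in> basis n \<and> y \<in> basis n \<and> weight n x = weight n y
     then complex_of_real (c (weight n x) / real (n choose weight n x)) else 0)"
proof -
  have sq: "dicke n i x * dicke n i y =
    (if x \<in> basis n \<and> y \<in> basis n \<and> weight n x = i \<and> weight n y = i
     then complex_of_real (1 / real (n choose i)) else 0)" for i
  proof -
    have "(1 / sqrt (real (n choose i))) * (1 / sqrt (real (n choose i))) = 1 / real (n choose i)"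
      by (simp add: real_sqrt_mult[symmetric])
    then show ?thesis unfolding dicke_def weight_def
      by (auto simp del: of_real_divide simp: of_real_mult[symmetric])
  qed
  have "dicke_mix n c x y = (\<Sum>i\<le>n. if i = weight n x then
      (if x \<in> basis n \<and> y \<in> basis n \<and> weight n x = weight n y
       then complex_of_real (c (weight n x) / real (n choose weight n x)) else 0) else 0)"
    unfolding dicke_mix_def by (intro sum.cong refl) (auto simp: mult.assoc sq)
  also have "\<dots> = (if x \<in> basis n \<and> y \<in> basis n \<and> weight n x = weight n y
      then complex_of_real (c (weight n x) / real (n choose weight n x)) else 0)"
    using weight_le[of n x] by (subst sum.delta) auto
  finally show ?thesis .
qed

lemma density_dicke_mix:
  assumes c0: "\<forall>i\<le>n. 0 \<le> c i" and c1: "(\<Sum>i\<le>n. c i) = 1"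
  shows "density n (dicke_mix n c)"
  unfolding density_def
proof (intro conjI allI impI)
  fix x y
  show "x \<notin> basis n \<or> y \<notin> basis n \<Longrightarrow> dicke_mix n c x y = 0" by (auto simp: dicke_mix_eq)
  show "dicke_mix n c y x = cnj (dicke_mix n c x y)" by (auto simp: dicke_mix_eq)
next
  fix v :: "(nat \<Rightarrow> bool) \<Rightarrow> complex"
  define B where "B = basis n"
  define u where "u i = (\<Sum>y\<in>B. dicke n i y * v y)" for i
  have "(\<Sum>x\<in>B. \<Sum>y\<in>B. cnj (v x) * dicke_mix n c x y * v y)
      = (\<Sum>x\<in>B. \<Sum>y\<in>B. \<Sum>i\<le>n. of_real (c i) * (dicke n i x * cnj (v x)) * (dicke n i y * v y))"
    unfolding dicke_mix_def by (simp add: sum_distrib_left sum_distrib_right mult_ac)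
  also have "\<dots> = (\<Sum>i\<le>n. \<Sum>x\<in>B. \<Sum>y\<in>B. of_real (c i) * (dicke n i x * cnj (v x)) * (dicke n i y * v y))"
    by (subst sum.swap) (simp add: sum.swap[of _ B "{..n}"])
  also have "\<dots> = (\<Sum>i\<le>n. of_real (c i) * (cnj (u i) * u i))"
    unfolding u_def by (simp add: sum_distrib_left sum_product mult_ac)
  also have "\<dots> = of_real (\<Sum>i\<le>n. c i * (cmod (u i))\<^sup>2)"
  proof -
    have "cnj (u i) * u i = of_real ((cmod (u i))\<^sup>2)" for i
      by (metis complex_norm_square mult.commute)
    then show ?thesis by (simp add: of_real_sum)
  qed
  finally have "(\<Sum>x\<in>B. \<Sum>y\<in>B. cnj (v x) * dicke_mix n c x y * v y) = of_real (\<Sum>i\<le>n. c i * (cmod (u i))\<^sup>2)" .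
  moreover have "0 \<le> (\<Sum>i\<le>n. c i * (cmod (u i))\<^sup>2)" using c0 by (intro sum_nonneg) auto
  ultimately show "let q = (\<Sum>x\<in>basis n. \<Sum>y\<in>basis n. cnj (v x) * dicke_mix n c x y * v y) in Im q = 0 \<and> 0 \<le> Re q"
    unfolding B_def Let_def by simp
next
  have "(\<Sum>x\<in>basis n. dicke_mix n c x x) = (\<Sum>x\<in>basis n. complex_of_real (c (weight n x) / real (n choose weight n x)))"
    by (intro sum.cong refl) (simp add: dicke_mix_eq)
  also have "\<dots> = (\<Sum>i\<le>n. \<Sum>x\<in>{x \<in> basis n. weight n x = i}. complex_of_real (c (weight n x) / real (n choose weight n x)))"
    by (rule sum.group[symmetric]) (auto simp: finite_basis weight_le)
  also have "\<dots> = (\<Sum>i\<le>n. of_real (c i))"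
    by (intro sum.cong refl) (simp add: card_basis_weight_eq)
  also have "\<dots> = 1" using c1 by (metis of_real_1 of_real_sum)
  finally show "(\<Sum>x\<in>basis n. dicke_mix n c x x) = 1" .
qed

lemma dicke_mix_neq:
  assumes "i \<le> n" "a i \<noteq> b i"
  shows "dicke_mix n a \<noteq> dicke_mix n b"
proof
  assume eq: "dicke_mix n a = dicke_mix n b"
  obtain x where "x \<in> basis n" "weight n x = i" using basis_weight_exists[OF assms(1)] .
  then have "a i / real (n choose i) = b i / real (n choose i)"
    using fun_cong[OF fun_cong[OF eq, of x], of x] by (simp add: dicke_mix_eq)
  then show False using assms by (simp add: divide_cancel_right)
qed

text \<open>The diagonal entry of the t-qubit reduction of \<open>dicke_mix n c\<close> at a label of weight r.\<close>

definition marg_moment :: "nat \<Rightarrow> nat \<Rightarrow> nat \<Rightarrow> (nat \<Rightarrow> real) \<Rightarrow> real" where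
  "marg_moment n t r c = (\<Sum>i\<le>n. c i * binom (n - t) (int i - int r) / binom n (int i))"

lemma binom_of_nat [simp]: "binom m (int i) = real (m choose i)"
  unfolding binom_def by simp

lemma binom_Suc: "binom (Suc m) j = binom m j + binom m (j - 1)"
proof (cases "j \<le> 0")
  case False
  then have "nat j = Suc (nat (j - 1))" by simp
  then show ?thesis using False unfolding binom_def by simp
qed (auto simp: binom_def)

lemma marg_moment_Suc:
  assumes "Suc t \<le> n"
  shows "marg_moment n t r c = marg_moment n (Suc t) r c + marg_moment n (Suc t) (Suc r) c"
proof -
  have "n - t = Suc (n - Suc t)" using assms by simp
  then have "binom (n - t) (int i - int r)
      = binom (n - Suc t) (int i - int r) + binom (n - Suc t) (int i - int (Suc r))" for i
    by (simp add: binom_Suc algebra_simps)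
  then show ?thesis
    unfolding marg_moment_def by (simp add: distrib_left add_divide_distrib sum.distrib)
qed

lemma marg_moment_0: "marg_moment n 0 0 c = (\<Sum>i\<le>n. c i)"
  unfolding marg_moment_def binom_def by simp

lemma marg_moment_eq_of_binom_weighted_eq:
  assumes "s \<le> m"
    and "(\<Sum>i\<le>n. a i * (binom m (int s) * binom (n - m) (int i - int s) / binom n (int i)))
       = (\<Sum>i\<le>n. b i * (binom m (int s) * binom (n - m) (int i - int s) / binom n (int i)))"
  shows "marg_moment n m s a = marg_moment n m s b"
proof -
  have factor: "(\<Sum>i\<le>n. c i * (binom m (int s) * binom (n - m) (int i - int s) / binom n (int i)))
     = binom m (int s) * marg_moment n m s c" for c
    unfolding marg_moment_def sum_distrib_left by (intro sum.cong refl) (simp add: mult_ac)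
  have "binom m (int s) \<noteq> 0" using assms(1) by simp
  then show ?thesis using assms(2) unfolding factor by simp
qed

lemma marg_moment_eq_downward:
  assumes "k \<le> n" and "\<forall>s\<le>k. marg_moment n k s a = marg_moment n k s b"
    and "t \<le> k" and "r \<le> t"
  shows "marg_moment n t r a = marg_moment n t r b"
proof -
  have "\<forall>r\<le>t. marg_moment n t r a = marg_moment n t r b"
    using \<open>t \<le> k\<close>
  proof (induction rule: inc_induct)
    case base
    then show ?case using assms(2) .
  next
    case (step t)
    then show ?case using \<open>k \<le> n\<close> by (simp add: marg_moment_Suc)
  qed
  then show ?thesis using \<open>r \<le> t\<close> by blast
qed

lemma merge_in_basis:
  assumes "S \<subseteq> {0..<n}" "\<alpha> \<in> sub_basis S" "z \<in> basis n"
  shows "merge S \<alpha> z \<in> basis n"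
  using assms unfolding merge_def basis_def sub_basis_def by auto

lemma weight_merge:
  assumes "S \<subseteq> {0..<n}" "\<alpha> \<in> sub_basis S" "z \<in> sub_basis ({0..<n} - S)"
  shows "weight n (merge S \<alpha> z) = weight n \<alpha> + weight n z"
proof -
  have "{j. j < n \<and> merge S \<alpha> z j} = {j. j < n \<and> \<alpha> j} \<union> {j. j < n \<and> z j}"
    and "{j. j < n \<and> \<alpha> j} \<inter> {j. j < n \<and> z j} = {}"
    using assms unfolding merge_def sub_basis_def by auto
  then show ?thesis unfolding weight_def by (simp add: card_Un_disjoint)
qed

lemma weight_sub_basis_le:
  assumes "S \<subseteq> {0..<n}" "\<alpha> \<in> sub_basis S"
  shows "weight n \<alpha> \<le> card S"
proof -
  have "{j. j < n \<and> \<alpha> j} \<subseteq> S" using assms(2) unfolding sub_basis_def by auto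
  moreover have "finite S" using assms(1) finite_subset by blast
  ultimately show ?thesis unfolding weight_def by (rule card_mono[rotated])
qed

lemma sum_complement_by_weight:
  fixes f :: "nat \<Rightarrow> real"
  assumes S: "S \<subseteq> {0..<n}" and r: "r \<le> card S"
  shows "(\<Sum>z\<in>basis n \<inter> sub_basis ({0..<n} - S). f (r + weight n z))
       = (\<Sum>i\<le>n. binom (n - card S) (int i - int r) * f i)"
proof -
  define Z where "Z = basis n \<inter> sub_basis ({0..<n} - S)"
  have card_compl: "card ({0..<n} - S) = n - card S"
    using S by (simp add: card_Diff_subset finite_subset)
  have "(\<Sum>z\<in>Z. f (r + weight n z)) = (\<Sum>i\<le>n. \<Sum>z\<in>{z \<in> Z. r + weight n z = i}. f (r + weight n z))"
  proof (rule sum.group[symmetric])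
    show "(\<lambda>z. r + weight n z) ` Z \<subseteq> {..n}"
    proof (rule image_subsetI)
      fix z assume "z \<in> Z"
      then have "weight n z \<le> n - card S"
        using weight_sub_basis_le[of "{0..<n} - S" n z] card_compl unfolding Z_def by auto
      then show "r + weight n z \<in> {..n}" using r S card_mono[of "{0..<n}" S] by auto
    qed
  qed (simp_all add: Z_def finite_basis)
  also have "\<dots> = (\<Sum>i\<le>n. binom (n - card S) (int i - int r) * f i)"
  proof (intro sum.cong refl)
    fix i
    have "real (card {z \<in> Z. r + weight n z = i}) = binom (n - card S) (int i - int r)"
    proof (cases "i < r")
      case False
      then have "{z \<in> Z. r + weight n z = i} = {z \<in> basis n \<inter> sub_basis ({0..<n} - S). weight n z = i - r}"
        unfolding Z_def by auto
      then show ?thesis using False card_weight_eq[of "{0..<n} - S" n "i - r"] card_compl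
        unfolding binom_def by (simp add: nat_diff_distrib)
    qed (auto simp: binom_def)
    then show "(\<Sum>z\<in>{z \<in> Z. r + weight n z = i}. f (r + weight n z))
        = binom (n - card S) (int i - int r) * f i"
      by simp
  qed
  finally show ?thesis unfolding Z_def .
qed

lemma ptrace_dicke_mix:
  assumes S: "S \<subseteq> {0..<n}" and \<alpha>: "\<alpha> \<in> sub_basis S" and \<beta>: "\<beta> \<in> sub_basis S"
  shows "ptrace n S (dicke_mix n c) \<alpha> \<beta> =
    (if weight n \<alpha> = weight n \<beta> then of_real (marg_moment n (card S) (weight n \<alpha>) c) else 0)"
proof -
  define f where "f i = c i / real (n choose i)" for i
  define Z where "Z = basis n \<inter> sub_basis ({0..<n} - S)"
  have "ptrace n S (dicke_mix n c) \<alpha> \<beta>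
      = (\<Sum>z\<in>Z. if weight n \<alpha> = weight n \<beta> then of_real (f (weight n \<alpha> + weight n z)) else 0)"
    unfolding ptrace_def Z_def[symmetric]
  proof (intro sum.cong refl)
    fix z assume "z \<in> Z"
    then have "z \<in> basis n" "z \<in> sub_basis ({0..<n} - S)" unfolding Z_def by auto
    then have "merge S \<alpha> z \<in> basis n" "merge S \<beta> z \<in> basis n"
      and "weight n (merge S \<alpha> z) = weight n \<alpha> + weight n z"
      and "weight n (merge S \<beta> z) = weight n \<beta> + weight n z"
      using merge_in_basis[OF S] weight_merge[OF S] \<alpha> \<beta> by blast+
    then show "dicke_mix n c (merge S \<alpha> z) (merge S \<beta> z)
        = (if weight n \<alpha> = weight n \<beta> then of_real (f (weight n \<alpha> + weight n z)) else 0)"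
      by (simp add: dicke_mix_eq f_def)
  qed
  also have "\<dots> = (if weight n \<alpha> = weight n \<beta>
      then of_real (\<Sum>i\<le>n. binom (n - card S) (int i - int (weight n \<alpha>)) * f i) else 0)"
    unfolding Z_def sum_complement_by_weight[OF S weight_sub_basis_le[OF S \<alpha>], symmetric] of_real_sum
    by simp
  also have "(\<Sum>i\<le>n. binom (n - card S) (int i - int (weight n \<alpha>)) * f i)
      = marg_moment n (card S) (weight n \<alpha>) c"
    unfolding marg_moment_def f_def by (intro sum.cong refl) simp
  finally show ?thesis .
qed

lemma marg_eq_dicke_mix:
  assumes "S \<subseteq> {0..<n}" and "\<forall>r\<le>card S. marg_moment n (card S) r a = marg_moment n (card S) r b"
  shows "marg_eq n S (dicke_mix n a) (dicke_mix n b)"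
  unfolding marg_eq_def
  using assms weight_sub_basis_le[OF assms(1)] by (simp add: ptrace_dicke_mix)

lemma determines_all_qubits:
  assumes "density n \<rho>"
  shows "determines n {{0..<n}} \<rho>"
proof -
  have "\<sigma> = \<rho>" if "density n \<sigma>" and m: "marg_eq n {0..<n} \<sigma> \<rho>" for \<sigma>
  proof (intro ext)
    fix x y
    have triv: "basis n \<inter> sub_basis ({0..<n} - {0..<n}) = {\<lambda>_. False}"
      unfolding basis_def sub_basis_def by auto
    have "ptrace n {0..<n} M x y = M x y" if "x \<in> basis n" "y \<in> basis n" for M
    proof -
      have "merge {0..<n} x (\<lambda>_. False) = x" "merge {0..<n} y (\<lambda>_. False) = y"
        using that unfolding merge_def basis_def by (auto simp: fun_eq_iff not_less)
      then show ?thesis unfolding ptrace_def triv by simp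
    qed
    then show "\<sigma> x y = \<rho> x y"
      using m \<open>density n \<sigma>\<close> assms unfolding marg_eq_def sub_basis_atLeast0LessThan density_def
      by metis
  qed
  then show ?thesis using assms unfolding determines_def compat_def marg_eq_def by auto
qed

lemma Lval_ge_Suc:
  assumes "density n \<rho>" "density n \<sigma>" "\<sigma> \<noteq> \<rho>"
    and marg: "\<And>S. S \<subseteq> {0..<n} \<Longrightarrow> card S \<le> k \<Longrightarrow> marg_eq n S \<sigma> \<rho>"
  shows "k + 1 \<le> Lval n \<rho>"
  unfolding Lval_def
proof (rule LeastI2)
  show "\<exists>\<S>. determines n \<S> \<rho> \<and> (\<forall>S\<in>\<S>. card S \<le> n)"
    using determines_all_qubits[OF assms(1)] by auto
next
  fix m assume "\<exists>\<S>. determines n \<S> \<rho> \<and> (\<forall>S\<in>\<S>. card S \<le> m)"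
  then obtain \<S> where det: "determines n \<S> \<rho>" and small: "\<forall>S\<in>\<S>. card S \<le> m" by blast
  show "k + 1 \<le> m"
  proof (rule ccontr)
    assume "\<not> k + 1 \<le> m"
    then have "\<sigma> \<in> compat n \<rho> \<S>"
      using det small marg assms(2) unfolding determines_def compat_def by fastforce
    then show False using det assms(3) unfolding determines_def by simp
  qed
qed

theorem mainTheorem15:
  fixes n k :: nat and lam :: "nat \<Rightarrow> real"
  assumes "\<forall>i\<le>n. 0 \<le> lam i"
    and "(\<Sum>i\<le>n. lam i) = 1"
    and "1 \<le> k" and "k \<le> n"
    and "\<exists>a :: nat \<Rightarrow> real. (\<forall>i\<le>n. 0 \<le> a i) \<and> (\<exists>i\<le>n. a i \<noteq> lam i) \<and>
           (\<forall>s\<le>k. (\<Sum>i\<le>n. a i * (binom k (int s) * binom (n - k) (int i - int s) / binom n (int i)))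
                 = (\<Sum>i\<le>n. lam i * (binom k (int s) * binom (n - k) (int i - int s) / binom n (int i))))"
  shows "k + 1 \<le> Lval n (dicke_mix n lam)"
proof -
  obtain a :: "nat \<Rightarrow> real" where a0: "\<forall>i\<le>n. 0 \<le> a i" and "\<exists>i\<le>n. a i \<noteq> lam i"
    and eqs: "\<forall>s\<le>k. (\<Sum>i\<le>n. a i * (binom k (int s) * binom (n - k) (int i - int s) / binom n (int i)))
                 = (\<Sum>i\<le>n. lam i * (binom k (int s) * binom (n - k) (int i - int s) / binom n (int i)))"
    using assms(5) by blast
  then have neq: "dicke_mix n a \<noteq> dicke_mix n lam" using dicke_mix_neq by blast
  have "\<forall>s\<le>k. marg_moment n k s a = marg_moment n k s lam"
    using eqs by (blast intro: marg_moment_eq_of_binom_weighted_eq)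
  then have moments: "marg_moment n t r a = marg_moment n t r lam" if "t \<le> k" "r \<le> t" for t r
    using marg_moment_eq_downward[OF \<open>k \<le> n\<close>] that by blast
  have "(\<Sum>i\<le>n. a i) = 1" using moments[of 0 0] assms(2) by (simp add: marg_moment_0)
  then have "density n (dicke_mix n a)" using a0 by (intro density_dicke_mix)
  moreover have "density n (dicke_mix n lam)" using assms(1,2) by (rule density_dicke_mix)
  ultimately show ?thesis
    using neq moments by (intro Lval_ge_Suc) (auto intro!: marg_eq_dicke_mix)
qed

end
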